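(* Let $D$ be a domain in $\mathbb{R}^d$, $p\in\partial D$ a strictly convex boundary point, $q\in D$, and $(\varphi_j)$ a sequence of projective automorphisms of $D$ with $q_j:=\varphi_j(q)\to p$. Let $U$ be a neighborhood of $p$ such that $D\cap U$ is convex, and set $D_j=\varphi_j^{-1}(D\cap U)$. Then $(D_j)$ is an exhaustion of $D$: for every compact set $K\subset D$ there is $j_0$ such that $K\subset D_j$ for all $j\ge j_0$.
   Context: $\mathbb{R}^d$ is embedded in $\mathbb{P}\mathbb{R}^d$ as the points $(1:x_1:\dots:x_d)$; a projective map is a map induced by a linear map of $\mathbb{R}^{d+1}$ acting on homogeneous coordinates, and a projective automorphism of $D$ is a bijective projective map of $D$ onto itself. A point $p\in\partial D$ is strictly convex if $\partial D$ is $\mathcal{C}^2$-smooth near $p$ and the restriction to the tangent hyperplane at $p$ of the Hessian of a local defining function is positive definite. *)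

theory Defs
  imports "HOL-Analysis.Analysis"
begin

text \<open>R^d is real^'n; homogeneous coordinates (x0 : x) are elements of real \<times> real^'n,
  and the point x of R^d is (1 : x).\<close>

definition projective_map_on :: "(real^'n \<Rightarrow> real^'n) \<Rightarrow> (real^'n) set \<Rightarrow> bool" where
  "projective_map_on f S \<longleftrightarrow>
     (\<exists>L :: (real \<times> (real^'n)) \<Rightarrow> (real \<times> (real^'n)). linear L \<and>
        (\<forall>x\<in>S. fst (L (1, x)) \<noteq> 0 \<and> f x = (1 / fst (L (1, x))) *\<^sub>R snd (L (1, x))))"

definition projective_automorphism :: "(real^'n \<Rightarrow> real^'n) \<Rightarrow> (real^'n) set \<Rightarrow> bool" where
  "projective_automorphism f D \<longleftrightarrow> projective_map_on f D \<and> bij_betw f D D"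

definition domain :: "(real^'n) set \<Rightarrow> bool" where
  "domain D \<longleftrightarrow> open D \<and> connected D \<and> D \<noteq> {}"

text \<open>Strictly convex boundary point: near p the boundary is C^2, given by a local defining
  function rho (D \<inter> V = {rho < 0}, nonvanishing gradient at p) with gradient g and
  continuous Hessian H, and the Hessian at p is positive definite on the tangent hyperplane.\<close>

definition strictly_convex_boundary_point :: "(real^'n) set \<Rightarrow> real^'n \<Rightarrow> bool" where
  "strictly_convex_boundary_point D p \<longleftrightarrow> p \<in> frontier D \<and>
     (\<exists>V (\<rho> :: real^'n \<Rightarrow> real) (g :: real^'n \<Rightarrow> real^'n) (H :: real^'n \<Rightarrow> real^'n^'n).
        open V \<and> p \<in> V \<and>
        (\<forall>x\<in>V. (\<rho> has_derivative (\<lambda>h. g x \<bullet> h)) (at x)) \<and>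
        (\<forall>x\<in>V. (g has_derivative (\<lambda>h. H x *v h)) (at x)) \<and>
        continuous_on V H \<and>
        D \<inter> V = {x\<in>V. \<rho> x < 0} \<and>
        g p \<noteq> 0 \<and>
        (\<forall>v. v \<noteq> 0 \<and> g p \<bullet> v = 0 \<longrightarrow> v \<bullet> (H p *v v) > 0))"

end

theory Submission
  imports Defs
begin

(*
  Near a strictly convex boundary point p, D contains no short chord whose midpoint is close
  to p: along a chord the defining function grows linearly when the chord is transversal to
  the tangent hyperplane and quadratically when it is nearly tangent, so it cannot be negative
  at both ends.  A projective map acts on each line as a linear fractional map; hence if it
  maps a ball B(c,R) into D, sends c close to p and moves some point of B(c,R/2) far from the
  image of c, then the image of c is the midpoint of a long chord in D, which is impossible.
  Thus \<phi>\<^sub>j \<longrightarrow> p uniformly on B(x,R/2) as soon as \<phi>\<^sub>j(x) \<longrightarrow> p, so the set of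
  points where \<phi>\<^sub>j converges to p is open and closed in the connected set D, and by
  compactness \<phi>\<^sub>j(K) \<subseteq> U for large j.
*)

lemma norm_matrix_vector_mult_le:
  fixes A :: "real^'n^'m"
  shows "norm (A *v x) \<le> real CARD('m) * real CARD('n) * norm A * norm x"
proof -
  have "\<bar>A $ i $ j\<bar> \<le> norm A" for i j
  proof -
    have "\<bar>A $ i $ j\<bar> \<le> norm (A $ i)" by (rule component_le_norm_cart)
    also have "\<dots> \<le> norm A" by (rule Finite_Cartesian_Product.norm_nth_le)
    finally show ?thesis .
  qed
  then have "onorm ((*v) A) \<le> real CARD('m) * real CARD('n) * norm A"
    by (rule onorm_le_matrix_component)
  moreover have "norm (A *v x) \<le> onorm ((*v) A) * norm x"
    by (simp add: onorm)
  ultimately show ?thesis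
    by (meson mult_right_mono norm_ge_zero order_trans)
qed

lemma has_real_derivative_along_line:
  fixes f :: "'a::real_normed_vector \<Rightarrow> real"
  assumes "(f has_derivative f') (at (z + t *\<^sub>R w))"
  shows "((\<lambda>t. f (z + t *\<^sub>R w)) has_real_derivative f' w) (at t)"
proof -
  have "((\<lambda>t. z + t *\<^sub>R w) has_derivative (\<lambda>h. h *\<^sub>R w)) (at t)"
    by (auto intro!: derivative_eq_intros)
  from has_derivative_compose[OF this assms]
  have "((\<lambda>t. f (z + t *\<^sub>R w)) has_derivative (\<lambda>h. f' (h *\<^sub>R w))) (at t)" .
  moreover have "(\<lambda>h. f' (h *\<^sub>R w)) = (*) (f' w)"
    using linear_scale[OF has_derivative_linear[OF assms]] by (simp add: fun_eq_iff)
  ultimately show ?thesis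
    by (simp add: has_field_derivative_def)
qed

lemma growth_from_derivative_lower_bound:
  fixes f f' :: "real \<Rightarrow> real"
  assumes "a \<le> b"
    and "\<And>t. a \<le> t \<Longrightarrow> t \<le> b \<Longrightarrow> (f has_real_derivative f' t) (at t)"
    and "\<And>t. a \<le> t \<Longrightarrow> t \<le> b \<Longrightarrow> k \<le> f' t"
  shows "f a + k * (b - a) \<le> f b"
proof -
  have "f a - k * a \<le> f b - k * b"
  proof (rule DERIV_nonneg_imp_nondecreasing[OF \<open>a \<le> b\<close>])
    fix t assume "a \<le> t" "t \<le> b"
    then show "\<exists>y. ((\<lambda>t. f t - k * t) has_real_derivative y) (at t) \<and> 0 \<le> y"
      using assms by (intro exI[of _ "f' t - k"]) (auto intro!: derivative_eq_intros)
  qed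
  then show ?thesis by (simp add: algebra_simps)
qed

lemma midpoint_bound_from_second_derivative:
  fixes f f' f'' :: "real \<Rightarrow> real"
  assumes "0 \<le> s"
    and "\<And>t. \<bar>t\<bar> \<le> s \<Longrightarrow> (f has_real_derivative f' t) (at t)"
    and "\<And>t. \<bar>t\<bar> \<le> s \<Longrightarrow> (f' has_real_derivative f'' t) (at t)"
    and "\<And>t. \<bar>t\<bar> \<le> s \<Longrightarrow> k \<le> f'' t"
  shows "2 * f 0 + k * s\<^sup>2 \<le> f s + f (- s)"
proof -
  define F where "F t = f t - k / 2 * t\<^sup>2" for t
  have "convex_on {-s..s} F"
  proof (rule f''_ge0_imp_convex)
    fix t :: real assume "t \<in> {-s..s}"
    then have t: "\<bar>t\<bar> \<le> s" by auto
    show "(F has_real_derivative f' t - k * t) (at t)"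
      unfolding F_def using assms(2)[OF t] by (auto intro!: derivative_eq_intros)
    show "((\<lambda>t. f' t - k * t) has_real_derivative f'' t - k) (at t)"
      using assms(3)[OF t] by (auto intro!: derivative_eq_intros)
    show "0 \<le> f'' t - k" using assms(4)[OF t] by simp
  qed simp
  from convex_onD[OF this, of "1/2" "-s" s] assms(1)
  have "F 0 \<le> (F (-s) + F s) / 2" by simp
  then show ?thesis by (simp add: F_def power2_eq_square algebra_simps)
qed

lemma definite_on_tangent_space_uniformly:
  fixes A :: "real^'n^'n" and a :: "real^'n"
  assumes "\<And>v. v \<noteq> 0 \<Longrightarrow> a \<bullet> v = 0 \<Longrightarrow> 0 < v \<bullet> (A *v v)"
  shows "\<exists>c>0. \<forall>w. norm w = 1 \<longrightarrow> c \<le> w \<bullet> (A *v w) \<or> c \<le> \<bar>a \<bullet> w\<bar>"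
proof -
  define F where "F w = max (w \<bullet> (A *v w)) \<bar>a \<bullet> w\<bar>" for w
  have "continuous_on (sphere 0 1) F"
    unfolding F_def by (intro continuous_intros)
  moreover have "sphere (0::real^'n) 1 \<noteq> {}" by simp
  ultimately obtain w0 where w0: "w0 \<in> sphere 0 1" and min: "\<And>w. w \<in> sphere 0 1 \<Longrightarrow> F w0 \<le> F w"
    using continuous_attains_inf[OF compact_sphere] by blast
  have "w0 \<noteq> 0" using w0 by auto
  then have "0 < F w0"
    using assms[of w0] by (cases "a \<bullet> w0 = 0") (auto simp: F_def)
  moreover have "F w0 \<le> w \<bullet> (A *v w) \<or> F w0 \<le> \<bar>a \<bullet> w\<bar>" if "norm w = 1" for w
    using min[of w] that by (auto simp: F_def max_def split: if_splits)
  ultimately show ?thesis by blast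
qed

lemma sign_choice_for_linear_form:
  fixes A :: "real^'n^'n" and a w :: "real^'n"
  assumes "c \<le> w \<bullet> (A *v w) \<or> c \<le> \<bar>a \<bullet> w\<bar>"
  obtains v where "v = w \<or> v = - w" "c \<le> v \<bullet> (A *v v) \<or> c \<le> a \<bullet> v"
proof (cases "c \<le> w \<bullet> (A *v w) \<or> c \<le> a \<bullet> w")
  case True
  then show thesis using that[of w] by blast
next
  case False
  have "(- w) \<bullet> (A *v (- w)) = w \<bullet> (A *v w)"
    using matrix_vector_mult_scaleR[of A "-1" w] by simp
  with False assms have "c \<le> (- w) \<bullet> (A *v (- w)) \<or> c \<le> a \<bullet> (- w)"
    by (auto simp: abs_if split: if_splits)
  then show thesis using that[of "- w"] by blast
qed

lemma defining_function_grows_along_chord: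
  fixes \<rho> :: "real^'n \<Rightarrow> real" and g :: "real^'n \<Rightarrow> real^'n" and H :: "real^'n \<Rightarrow> real^'n^'n"
  assumes d\<rho>: "\<And>t. \<bar>t\<bar> \<le> s \<Longrightarrow> (\<rho> has_derivative (\<lambda>h. g (z + t *\<^sub>R w) \<bullet> h)) (at (z + t *\<^sub>R w))"
    and dg: "\<And>t. \<bar>t\<bar> \<le> s \<Longrightarrow> (g has_derivative (\<lambda>h. H (z + t *\<^sub>R w) *v h)) (at (z + t *\<^sub>R w))"
    and "0 \<le> s"
    and "(\<forall>t. \<bar>t\<bar> \<le> s \<longrightarrow> k \<le> g (z + t *\<^sub>R w) \<bullet> w) \<or>
         (\<forall>t. \<bar>t\<bar> \<le> s \<longrightarrow> k \<le> w \<bullet> (H (z + t *\<^sub>R w) *v w))"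
  shows "\<rho> z + min (k * s) (k * s\<^sup>2 / 2) \<le> max (\<rho> (z + s *\<^sub>R w)) (\<rho> (z - s *\<^sub>R w))"
proof -
  define r where "r t = \<rho> (z + t *\<^sub>R w)" for t
  have r': "(r has_real_derivative g (z + t *\<^sub>R w) \<bullet> w) (at t)" if "\<bar>t\<bar> \<le> s" for t
    unfolding r_def using has_real_derivative_along_line[OF d\<rho>[OF that]] .
  from assms(4) have "r 0 + min (k * s) (k * s\<^sup>2 / 2) \<le> max (r s) (r (- s))"
  proof
    assume "\<forall>t. \<bar>t\<bar> \<le> s \<longrightarrow> k \<le> g (z + t *\<^sub>R w) \<bullet> w"
    then have "r 0 + k * (s - 0) \<le> r s"
      using r' \<open>0 \<le> s\<close>
      by (intro growth_from_derivative_lower_bound[where f' = "\<lambda>t. g (z + t *\<^sub>R w) \<bullet> w"]) auto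
    then have "r 0 + k * s \<le> r s" by simp
    then show ?thesis
      using min.cobounded1[of "k * s" "k * s\<^sup>2 / 2"] max.cobounded1[of "r s" "r (- s)"] by linarith
  next
    assume k: "\<forall>t. \<bar>t\<bar> \<le> s \<longrightarrow> k \<le> w \<bullet> (H (z + t *\<^sub>R w) *v w)"
    have "((\<lambda>t. g (z + t *\<^sub>R w) \<bullet> w) has_real_derivative w \<bullet> (H (z + t *\<^sub>R w) *v w)) (at t)"
      if "\<bar>t\<bar> \<le> s" for t
      using has_real_derivative_along_line[OF has_derivative_inner_left[OF dg[OF that]]]
      by (simp add: inner_commute)
    then have "2 * r 0 + k * s\<^sup>2 \<le> r s + r (- s)"
      using r' k \<open>0 \<le> s\<close>
      by (intro midpoint_bound_from_second_derivative[where f' = "\<lambda>t. g (z + t *\<^sub>R w) \<bullet> w"]) auto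
    then show ?thesis
      using min.cobounded2[of "k * s" "k * s\<^sup>2 / 2"] max.cobounded1[of "r s" "r (- s)"]
        max.cobounded2[of "r (- s)" "r s"] by linarith
  qed
  then show ?thesis by (simp add: r_def)
qed

lemma defining_function_grows_along_chord_near:
  fixes \<rho> :: "real^'n \<Rightarrow> real" and g :: "real^'n \<Rightarrow> real^'n" and H :: "real^'n \<Rightarrow> real^'n^'n"
  assumes d\<rho>: "\<forall>y\<in>ball p \<delta>. (\<rho> has_derivative (\<lambda>h. g y \<bullet> h)) (at y)"
    and dg: "\<forall>y\<in>ball p \<delta>. (g has_derivative (\<lambda>h. H y *v h)) (at y)"
    and close: "\<forall>y\<in>ball p \<delta>. \<bar>g y \<bullet> v - g p \<bullet> v\<bar> < k \<and> \<bar>v \<bullet> (H y *v v) - v \<bullet> (H p *v v)\<bar> < k"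
    and v: "norm v = 1" "2 * k \<le> v \<bullet> (H p *v v) \<or> 2 * k \<le> g p \<bullet> v"
    and z: "dist p z + s < \<delta>" "0 \<le> s"
  shows "\<rho> z + min (k * s) (k * s\<^sup>2 / 2) \<le> max (\<rho> (z + s *\<^sub>R v)) (\<rho> (z - s *\<^sub>R v))"
proof (rule defining_function_grows_along_chord)
  have near: "z + t *\<^sub>R v \<in> ball p \<delta>" if "\<bar>t\<bar> \<le> s" for t
  proof -
    have "dist p (z + t *\<^sub>R v) \<le> dist p z + dist z (z + t *\<^sub>R v)"
      by (rule dist_triangle)
    also have "dist z (z + t *\<^sub>R v) = \<bar>t\<bar>"
      using v(1) by (simp add: dist_norm)
    finally show ?thesis using that z by simp
  qed
  show "(\<rho> has_derivative (\<lambda>h. g (z + t *\<^sub>R v) \<bullet> h)) (at (z + t *\<^sub>R v))"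
    "(g has_derivative (\<lambda>h. H (z + t *\<^sub>R v) *v h)) (at (z + t *\<^sub>R v))" if "\<bar>t\<bar> \<le> s" for t
    using d\<rho> dg near[OF that] by blast+
  from v(2) show "(\<forall>t. \<bar>t\<bar> \<le> s \<longrightarrow> k \<le> g (z + t *\<^sub>R v) \<bullet> v) \<or>
      (\<forall>t. \<bar>t\<bar> \<le> s \<longrightarrow> k \<le> v \<bullet> (H (z + t *\<^sub>R v) *v v))"
  proof (elim disjE)
    assume "2 * k \<le> v \<bullet> (H p *v v)"
    then show ?thesis using bspec[OF close near] unfolding abs_less_iff by force
  next
    assume "2 * k \<le> g p \<bullet> v"
    then show ?thesis using bspec[OF close near] unfolding abs_less_iff by force
  qed
qed (rule z(2))

lemma eventually_forms_close_on_unit_sphere: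
  fixes g :: "real^'n \<Rightarrow> real^'n" and H :: "real^'n \<Rightarrow> real^'n^'n"
  assumes "isCont g p" "isCont H p" "0 < e"
  shows "\<forall>\<^sub>F y in nhds p. \<forall>w. norm w = 1 \<longrightarrow>
           \<bar>g y \<bullet> w - g p \<bullet> w\<bar> < e \<and> \<bar>w \<bullet> (H y *v w) - w \<bullet> (H p *v w)\<bar> < e"
proof -
  define M where "M = real CARD('n) * real CARD('n)"
  have M: "0 < M" by (simp add: M_def)
  have "\<forall>\<^sub>F y in nhds p. dist (g y) (g p) < e"
    using assms(1,3) by (simp add: tendsto_at_iff_tendsto_nhds tendstoD isCont_def)
  moreover have "\<forall>\<^sub>F y in nhds p. dist (H y) (H p) < e / M"
    using assms(2,3) M by (simp add: tendsto_at_iff_tendsto_nhds tendstoD isCont_def)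
  ultimately show ?thesis
  proof eventually_elim
    case (elim y)
    show ?case
    proof (intro allI impI conjI)
      fix w :: "real^'n" assume w: "norm w = 1"
      have "\<bar>g y \<bullet> w - g p \<bullet> w\<bar> \<le> norm (g y - g p) * norm w"
        by (metis Cauchy_Schwarz_ineq2 inner_diff_left)
      then show "\<bar>g y \<bullet> w - g p \<bullet> w\<bar> < e" using elim w by (simp add: dist_norm)
      have "\<bar>w \<bullet> (H y *v w) - w \<bullet> (H p *v w)\<bar> \<le> norm w * norm ((H y - H p) *v w)"
        by (metis Cauchy_Schwarz_ineq2 inner_diff_right matrix_vector_mult_diff_rdistrib)
      also have "\<dots> \<le> M * norm (H y - H p)"
        using norm_matrix_vector_mult_le[of "H y - H p" w] w by (simp add: M_def)
      also have "\<dots> < e"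
        using elim M by (simp add: dist_norm field_simps)
      finally show "\<bar>w \<bullet> (H y *v w) - w \<bullet> (H p *v w)\<bar> < e" .
    qed
  qed
qed

definition no_centered_chords_near :: "'a::real_normed_vector set \<Rightarrow> 'a \<Rightarrow> bool" where
  "no_centered_chords_near D p \<longleftrightarrow>
     (\<exists>r0>0. \<forall>s\<in>{0<..r0}. \<exists>\<epsilon>>0. \<forall>z\<in>ball p \<epsilon>. \<forall>w. norm w = 1 \<longrightarrow>
        z + s *\<^sub>R w \<notin> D \<or> z - s *\<^sub>R w \<notin> D)"

lemma defining_function_nonneg_at_frontier:
  fixes \<rho> :: "'a::topological_space \<Rightarrow> real"
  assumes "p \<in> frontier D" "open V" "p \<in> V" "continuous_on V \<rho>" "D \<inter> V = {x\<in>V. \<rho> x < 0}"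
  shows "0 \<le> \<rho> p"
proof (rule ccontr)
  assume "\<not> 0 \<le> \<rho> p"
  have "open (V \<inter> \<rho> -` {..<0})"
    using assms(2,4) by (intro continuous_open_preimage) auto
  then have "V \<inter> \<rho> -` {..<0} \<subseteq> interior D"
    using assms(5) by (intro interior_maximal) auto
  with \<open>\<not> 0 \<le> \<rho> p\<close> assms(1,3) show False
    by (auto simp: frontier_def)
qed

lemma defining_function_grows_on_short_chords:
  fixes \<rho> :: "real^'n \<Rightarrow> real" and g :: "real^'n \<Rightarrow> real^'n" and H :: "real^'n \<Rightarrow> real^'n^'n"
  assumes V: "open V" "p \<in> V"
    and d\<rho>: "\<forall>x\<in>V. (\<rho> has_derivative (\<lambda>h. g x \<bullet> h)) (at x)"
    and dg: "\<forall>x\<in>V. (g has_derivative (\<lambda>h. H x *v h)) (at x)"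
    and cH: "continuous_on V H"
    and pos: "\<forall>v. v \<noteq> 0 \<and> g p \<bullet> v = 0 \<longrightarrow> v \<bullet> (H p *v v) > 0"
  obtains \<delta> k where "0 < \<delta>" "0 < k" "ball p (2 * \<delta>) \<subseteq> V"
    "\<And>z w s. dist z p < \<delta> \<Longrightarrow> norm w = 1 \<Longrightarrow> 0 < s \<Longrightarrow> s \<le> \<delta> \<Longrightarrow>
       \<rho> z + min (k * s) (k * s\<^sup>2 / 2) \<le> max (\<rho> (z + s *\<^sub>R w)) (\<rho> (z - s *\<^sub>R w))"
proof -
  have "isCont g p"
    using dg V(2) has_derivative_continuous by blast
  have "isCont H p"
    using cH V continuous_on_eq_continuous_at by blast
  obtain c where c: "0 < c" "\<And>w. norm w = 1 \<Longrightarrow> c \<le> w \<bullet> (H p *v w) \<or> c \<le> \<bar>g p \<bullet> w\<bar>"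
    using definite_on_tangent_space_uniformly[of "g p" "H p"] pos by blast
  have "\<forall>\<^sub>F y in nhds p. y \<in> V \<and> (\<forall>w. norm w = 1 \<longrightarrow>
          \<bar>g y \<bullet> w - g p \<bullet> w\<bar> < c/2 \<and> \<bar>w \<bullet> (H y *v w) - w \<bullet> (H p *v w)\<bar> < c/2)"
    using eventually_nhds_in_open[OF V]
      eventually_forms_close_on_unit_sphere[OF \<open>isCont g p\<close> \<open>isCont H p\<close>, of "c/2"] c(1)
    by (intro eventually_conj) auto
  then obtain \<delta> where "0 < \<delta>" and \<delta>: "\<And>y. dist y p < \<delta> \<Longrightarrow> y \<in> V \<and> (\<forall>w. norm w = 1 \<longrightarrow>
          \<bar>g y \<bullet> w - g p \<bullet> w\<bar> < c/2 \<and> \<bar>w \<bullet> (H y *v w) - w \<bullet> (H p *v w)\<bar> < c/2)"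
    unfolding eventually_nhds_metric by blast
  have "\<forall>y\<in>ball p \<delta>. (\<rho> has_derivative (\<lambda>h. g y \<bullet> h)) (at y)"
    "\<forall>y\<in>ball p \<delta>. (g has_derivative (\<lambda>h. H y *v h)) (at y)"
    using \<delta> d\<rho> dg by (auto simp: dist_commute)
  note chord = defining_function_grows_along_chord_near[OF this]
  have close: "\<forall>y\<in>ball p \<delta>. \<bar>g y \<bullet> v - g p \<bullet> v\<bar> < c/2 \<and> \<bar>v \<bullet> (H y *v v) - v \<bullet> (H p *v v)\<bar> < c/2"
    if "norm v = 1" for v
    using \<delta> that by (auto simp: dist_commute)
  show thesis
  proof (rule that[of "\<delta>/2" "c/2"])
    show "0 < \<delta>/2" "0 < c/2" using \<open>0 < \<delta>\<close> c(1) by simp_all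
    show "ball p (2 * (\<delta>/2)) \<subseteq> V" using \<delta> by (auto simp: dist_commute)
    fix z w :: "real^'n" and s :: real
    assume "dist z p < \<delta>/2" and w: "norm w = 1" and "0 < s" "s \<le> \<delta>/2"
    then have zs: "dist p z + s < \<delta>" "0 \<le> s" by (simp_all add: dist_commute)
    obtain v where v: "v = w \<or> v = - w" "c \<le> v \<bullet> (H p *v v) \<or> c \<le> g p \<bullet> v"
      using sign_choice_for_linear_form[OF c(2)[OF w]] .
    with w have v1: "norm v = 1" by auto
    have "\<rho> z + min (c/2 * s) (c/2 * s\<^sup>2 / 2) \<le> max (\<rho> (z + s *\<^sub>R v)) (\<rho> (z - s *\<^sub>R v))"
      by (rule chord[OF close[OF v1] v1]) (use v(2) zs in simp_all)
    moreover have "max (\<rho> (z - s *\<^sub>R w)) (\<rho> (z + s *\<^sub>R w)) = max (\<rho> (z + s *\<^sub>R w)) (\<rho> (z - s *\<^sub>R w))"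
      by (rule max.commute)
    ultimately show "\<rho> z + min (c/2 * s) (c/2 * s\<^sup>2 / 2) \<le> max (\<rho> (z + s *\<^sub>R w)) (\<rho> (z - s *\<^sub>R w))"
      using v(1) by auto
  qed
qed

lemma strictly_convex_boundary_point_no_centered_chords:
  fixes D :: "(real^'n) set"
  assumes "strictly_convex_boundary_point D p"
  shows "no_centered_chords_near D p"
proof -
  obtain V \<rho> g H where V: "open V" "p \<in> V"
    and d\<rho>: "\<forall>x\<in>V. (\<rho> has_derivative (\<lambda>h. g x \<bullet> h)) (at x)"
    and dg: "\<forall>x\<in>V. (g has_derivative (\<lambda>h. H x *v h)) (at x)"
    and cH: "continuous_on V H" and DV: "D \<inter> V = {x\<in>V. \<rho> x < 0}"
    and pos: "\<forall>v. v \<noteq> 0 \<and> g p \<bullet> v = 0 \<longrightarrow> v \<bullet> (H p *v v) > 0"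
    and p: "p \<in> frontier D"
    using assms unfolding strictly_convex_boundary_point_def by blast
  have cont_\<rho>: "continuous_on V \<rho>"
    using d\<rho> has_derivative_continuous by (blast intro: continuous_at_imp_continuous_on)
  have \<rho>p: "0 \<le> \<rho> p"
    by (rule defining_function_nonneg_at_frontier[OF p V cont_\<rho> DV])
  obtain \<delta> k where "0 < \<delta>" "0 < k" and \<delta>V: "ball p (2 * \<delta>) \<subseteq> V"
    and chord: "\<And>z w s. dist z p < \<delta> \<Longrightarrow> norm w = 1 \<Longrightarrow> 0 < s \<Longrightarrow> s \<le> \<delta> \<Longrightarrow>
       \<rho> z + min (k * s) (k * s\<^sup>2 / 2) \<le> max (\<rho> (z + s *\<^sub>R w)) (\<rho> (z - s *\<^sub>R w))"
    using defining_function_grows_on_short_chords[OF V d\<rho> dg cH pos] by blast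
  show ?thesis
    unfolding no_centered_chords_near_def
  proof (rule exI[of _ \<delta>], intro conjI ballI)
    show "0 < \<delta>" by fact
    fix s :: real assume s: "s \<in> {0<..\<delta>}"
    define m where "m = min (k * s) (k * s\<^sup>2 / 2)"
    have "0 < m" using s \<open>0 < k\<close> by (simp add: m_def)
    moreover have "isCont \<rho> p"
      using cont_\<rho> V continuous_on_eq_continuous_at by blast
    ultimately obtain \<epsilon> where "0 < \<epsilon>" and \<epsilon>: "\<And>z. dist z p < \<epsilon> \<Longrightarrow> dist (\<rho> z) (\<rho> p) < m"
      unfolding continuous_at_eps_delta by blast
    show "\<exists>\<epsilon>>0. \<forall>z\<in>ball p \<epsilon>. \<forall>w. norm w = 1 \<longrightarrow> z + s *\<^sub>R w \<notin> D \<or> z - s *\<^sub>R w \<notin> D"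
    proof (intro exI[of _ "min \<epsilon> \<delta>"] conjI ballI allI impI)
      show "0 < min \<epsilon> \<delta>" using \<open>0 < \<epsilon>\<close> \<open>0 < \<delta>\<close> by simp
      fix z w :: "real^'n" assume "z \<in> ball p (min \<epsilon> \<delta>)" and w: "norm w = 1"
      then have z: "dist z p < \<delta>" "dist z p < \<epsilon>"
        by (simp_all add: dist_commute)
      have "\<rho> z + m \<le> max (\<rho> (z + s *\<^sub>R w)) (\<rho> (z - s *\<^sub>R w))"
        using chord[OF z(1) w, of s] s by (simp add: m_def)
      with \<epsilon>[OF z(2)] \<rho>p have "0 < max (\<rho> (z + s *\<^sub>R w)) (\<rho> (z - s *\<^sub>R w))"
        unfolding dist_real_def abs_less_iff by linarith
      moreover have "dist (z + s *\<^sub>R w) z = s" "dist (z - s *\<^sub>R w) z = s"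
        using w s by (simp_all add: dist_norm)
      then have "z + s *\<^sub>R w \<in> V" "z - s *\<^sub>R w \<in> V"
        using z(1) s \<delta>V dist_triangle[of "z + s *\<^sub>R w" p z] dist_triangle[of "z - s *\<^sub>R w" p z]
        by (auto simp: dist_commute)
      moreover have "\<rho> x < 0" if "x \<in> D" "x \<in> V" for x
        using DV that by blast
      ultimately show "z + s *\<^sub>R w \<notin> D \<or> z - s *\<^sub>R w \<notin> D"
        by (metis max_less_iff_conj not_less_iff_gr_or_eq)
    qed
  qed
qed

lemma projective_map_on_subset:
  "projective_map_on f S \<Longrightarrow> T \<subseteq> S \<Longrightarrow> projective_map_on f T"
  unfolding projective_map_on_def by blast

lemma projective_map_on_line:
  fixes f :: "real^'n \<Rightarrow> real^'n"
  assumes "projective_map_on f S" "c \<in> S"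
  obtains \<kappa> w where "\<And>t. c + t *\<^sub>R u \<in> S \<Longrightarrow>
    1 + t * \<kappa> \<noteq> 0 \<and> f (c + t *\<^sub>R u) = f c + (t / (1 + t * \<kappa>)) *\<^sub>R w"
proof -
  obtain L :: "real \<times> (real^'n) \<Rightarrow> real \<times> (real^'n)" where L: "linear L"
    and f: "\<And>x. x \<in> S \<Longrightarrow> fst (L (1, x)) \<noteq> 0 \<and> f x = (1 / fst (L (1, x))) *\<^sub>R snd (L (1, x))"
    using assms(1) unfolding projective_map_on_def by blast
  define m where "m = fst (L (1, c))"
  define \<kappa> where "\<kappa> = fst (L (0, u)) / m"
  define B where "B = snd (L (1, c))"
  define C where "C = snd (L (0, u))"
  have m: "m \<noteq> 0" and fc: "f c = (1 / m) *\<^sub>R B"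
    using f[OF assms(2)] by (simp_all add: m_def B_def)
  have "L (1, c + t *\<^sub>R u) = L (1, c) + t *\<^sub>R L (0, u)" for t
    using linear_add[OF L, of "(1, c)" "t *\<^sub>R (0, u)"] linear_scale[OF L, of t "(0, u)"] by simp
  then have L_line: "fst (L (1, c + t *\<^sub>R u)) = m * (1 + t * \<kappa>)"
    "snd (L (1, c + t *\<^sub>R u)) = B + t *\<^sub>R C" for t
    using m by (simp_all add: m_def \<kappa>_def B_def C_def field_simps)
  show thesis
  proof (rule that[of \<kappa> "(1 / m) *\<^sub>R (C - \<kappa> *\<^sub>R B)"])
    fix t assume "c + t *\<^sub>R u \<in> S"
    from f[OF this] have nz: "1 + t * \<kappa> \<noteq> 0"
      and f_line: "f (c + t *\<^sub>R u) = (1 / (m * (1 + t * \<kappa>))) *\<^sub>R (B + t *\<^sub>R C)"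
      by (simp_all add: L_line)
    note f_line
    also have "\<dots> = f c + (t / (1 + t * \<kappa>)) *\<^sub>R ((1 / m) *\<^sub>R (C - \<kappa> *\<^sub>R B))"
      using m nz unfolding fc by (simp add: vec_eq_iff divide_simps) (simp add: algebra_simps)
    finally show "1 + t * \<kappa> \<noteq> 0 \<and> f (c + t *\<^sub>R u) = f c + (t / (1 + t * \<kappa>)) *\<^sub>R ((1 / m) *\<^sub>R (C - \<kappa> *\<^sub>R B))"
      using nz by blast
  qed
qed

lemma affine_positive_on_symmetric_interval:
  fixes \<kappa> R t :: real
  assumes "\<And>t. \<bar>t\<bar> \<le> R \<Longrightarrow> 1 + t * \<kappa> \<noteq> 0" and "\<bar>t\<bar> \<le> R"
  shows "0 < 1 + t * \<kappa>"
proof (rule ccontr)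
  assume "\<not> 0 < 1 + t * \<kappa>"
  then have "1 \<le> \<bar>t\<bar> * \<bar>\<kappa>\<bar>"
    using abs_ge_minus_self[of "t * \<kappa>"] by (simp add: abs_mult)
  then have "\<kappa> \<noteq> 0" and "\<bar>- 1 / \<kappa>\<bar> \<le> \<bar>t\<bar>"
    by (auto simp: divide_le_eq)
  then show False
    using assms(1)[of "- 1 / \<kappa>"] assms(2) by simp
qed

lemma linear_fractional_symmetric_image:
  fixes \<kappa> R d a :: real
  assumes nz: "\<And>t. \<bar>t\<bar> \<le> R \<Longrightarrow> 1 + t * \<kappa> \<noteq> 0"
    and d: "0 < d" "d \<le> R / 2" and a: "0 \<le> a" "2 * a \<le> d / (1 + d * \<kappa>)"
  shows "a \<in> (\<lambda>t. t / (1 + t * \<kappa>)) ` {-R..R}" "- a \<in> (\<lambda>t. t / (1 + t * \<kappa>)) ` {-R..R}"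
proof -
  define \<mu> where "\<mu> t = t / (1 + t * \<kappa>)" for t
  have pos: "0 < 1 + t * \<kappa>" if "\<bar>t\<bar> \<le> R" for t
    using affine_positive_on_symmetric_interval[OF nz that] .
  have cont: "continuous_on {-R..R} \<mu>"
    unfolding \<mu>_def using pos by (intro continuous_intros) (auto simp: less_imp_neq[symmetric])
  have "- 1 < R * \<kappa>"
    using pos[of R] d by simp
  then have "3 * d * (- 1) \<le> 3 * d * (R * \<kappa>)"
    using d by (intro mult_left_mono) auto
  then have "d * (1 - R * \<kappa>) \<le> 2 * R * (1 + d * \<kappa>)"
    using d by (simp add: algebra_simps)
  then have "\<mu> d / 2 \<le> - \<mu> (- R)"
    using pos[of d] pos[of "- R"] d by (simp add: \<mu>_def field_simps)
  moreover have "\<mu> 0 = 0" "2 * a \<le> \<mu> d"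
    using a by (simp_all add: \<mu>_def)
  moreover have "continuous_on {0..d} \<mu>" "continuous_on {-R..0} \<mu>"
    using cont d by (auto elim!: continuous_on_subset)
  ultimately have "\<exists>t\<ge>0. t \<le> d \<and> \<mu> t = a" "\<exists>t\<ge>- R. t \<le> 0 \<and> \<mu> t = - a"
    using a d by (auto intro!: IVT')
  then show "a \<in> (\<lambda>t. t / (1 + t * \<kappa>)) ` {-R..R}" "- a \<in> (\<lambda>t. t / (1 + t * \<kappa>)) ` {-R..R}"
    using d unfolding \<mu>_def by force+
qed

lemma projective_map_centered_chord:
  fixes f :: "real^'n \<Rightarrow> real^'n"
  assumes f: "projective_map_on f (cball c R)" and y: "y \<in> cball c (R/2)"
    and s: "0 < s" "2 * s \<le> dist (f y) (f c)"
  shows "\<exists>v. norm v = 1 \<and> f c + s *\<^sub>R v \<in> f ` cball c R \<and> f c - s *\<^sub>R v \<in> f ` cball c R"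
proof -
  define d where "d = dist c y"
  define u where "u = (1 / d) *\<^sub>R (y - c)"
  have "y \<noteq> c" using s by auto
  then have d: "0 < d" "d \<le> R / 2" and u: "norm u = 1" and y_line: "y = c + d *\<^sub>R u"
    using y by (auto simp: d_def u_def dist_norm norm_minus_commute)
  have line: "c + t *\<^sub>R u \<in> cball c R \<longleftrightarrow> \<bar>t\<bar> \<le> R" for t
    using u by (simp add: dist_norm)
  have "c \<in> cball c R" using d by simp
  then obtain \<kappa> w where "\<And>t. c + t *\<^sub>R u \<in> cball c R \<Longrightarrow>
      1 + t * \<kappa> \<noteq> 0 \<and> f (c + t *\<^sub>R u) = f c + (t / (1 + t * \<kappa>)) *\<^sub>R w"
    using projective_map_on_line[OF f, where u = u] by blast
  note \<kappa>w = this[unfolded line]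
  have "0 < 1 + d * \<kappa>"
    using affine_positive_on_symmetric_interval[of R \<kappa> d] \<kappa>w d by simp
  moreover have "f y - f c = (d / (1 + d * \<kappa>)) *\<^sub>R w"
    using \<kappa>w[of d] d y_line by simp
  ultimately have "2 * s \<le> d / (1 + d * \<kappa>) * norm w"
    using s d by (simp add: dist_norm)
  moreover from this have w: "0 < norm w"
    using s by (cases "w = 0") auto
  ultimately have "2 * (s / norm w) \<le> d / (1 + d * \<kappa>)"
    by (simp add: pos_divide_le_eq)
  then have "s / norm w \<in> (\<lambda>t. t / (1 + t * \<kappa>)) ` {-R..R}"
    "- (s / norm w) \<in> (\<lambda>t. t / (1 + t * \<kappa>)) ` {-R..R}"
    using linear_fractional_symmetric_image[of R \<kappa> d "s / norm w"] \<kappa>w d s by auto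
  then obtain t1 t2 where t1: "t1 \<in> {-R..R}" "t1 / (1 + t1 * \<kappa>) = s / norm w"
    and t2: "t2 \<in> {-R..R}" "t2 / (1 + t2 * \<kappa>) = - (s / norm w)"
    by (metis (no_types, lifting) imageE)
  then have t: "\<bar>t1\<bar> \<le> R" "\<bar>t2\<bar> \<le> R" by auto
  then have "f (c + t1 *\<^sub>R u) = f c + s *\<^sub>R ((1 / norm w) *\<^sub>R w)"
    "f (c + t2 *\<^sub>R u) = f c - s *\<^sub>R ((1 / norm w) *\<^sub>R w)"
    using \<kappa>w t1(2) t2(2) by simp_all
  moreover have "norm ((1 / norm w) *\<^sub>R w) = 1" using w by simp
  moreover have "c + t1 *\<^sub>R u \<in> cball c R" "c + t2 *\<^sub>R u \<in> cball c R"
    using t line by simp_all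
  ultimately show ?thesis
    by (intro exI[of _ "(1 / norm w) *\<^sub>R w"]) (auto intro: image_eqI[OF sym])
qed

lemma projective_half_ball_image_near:
  fixes D :: "(real^'n) set"
  assumes D: "no_centered_chords_near D p" and "0 < \<tau>"
  obtains \<delta> where "0 < \<delta>"
    and "\<And>f c R. projective_map_on f (cball c R) \<Longrightarrow> f ` cball c R \<subseteq> D \<Longrightarrow> dist (f c) p < \<delta> \<Longrightarrow>
           f ` cball c (R/2) \<subseteq> ball p \<tau>"
proof -
  obtain r0 where "0 < r0" and r0: "\<And>s. s \<in> {0<..r0} \<Longrightarrow> \<exists>\<epsilon>>0. \<forall>z\<in>ball p \<epsilon>. \<forall>w. norm w = 1 \<longrightarrow>
      z + s *\<^sub>R w \<notin> D \<or> z - s *\<^sub>R w \<notin> D"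
    using D unfolding no_centered_chords_near_def by blast
  define s where "s = min (\<tau>/4) r0"
  have s: "0 < s" "s \<le> \<tau>/4" "s \<in> {0<..r0}"
    using \<open>0 < \<tau>\<close> \<open>0 < r0\<close> by (auto simp: s_def)
  then obtain \<epsilon> where "0 < \<epsilon>"
    and \<epsilon>: "\<And>z w. z \<in> ball p \<epsilon> \<Longrightarrow> norm w = 1 \<Longrightarrow> z + s *\<^sub>R w \<notin> D \<or> z - s *\<^sub>R w \<notin> D"
    using r0 by blast
  show thesis
  proof (rule that[of "min \<epsilon> (\<tau>/2)"])
    show "0 < min \<epsilon> (\<tau>/2)" using \<open>0 < \<epsilon>\<close> \<open>0 < \<tau>\<close> by simp
    fix f c R
    assume f: "projective_map_on f (cball c R)" "f ` cball c R \<subseteq> D" and fc: "dist (f c) p < min \<epsilon> (\<tau>/2)"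
    show "f ` cball c (R/2) \<subseteq> ball p \<tau>"
    proof (rule image_subsetI, rule ccontr)
      fix y assume y: "y \<in> cball c (R/2)" and "f y \<notin> ball p \<tau>"
      then have "2 * s \<le> dist (f y) (f c)"
        using fc s dist_triangle[of p "f y" "f c"] by (auto simp: dist_commute)
      then obtain w where "norm w = 1" "f c + s *\<^sub>R w \<in> D" "f c - s *\<^sub>R w \<in> D"
        using projective_map_centered_chord[OF f(1) y s(1)] f(2) by blast
      moreover have "f c \<in> ball p \<epsilon>" using fc by (simp add: dist_commute)
      ultimately show False using \<epsilon> by blast
    qed
  qed
qed

lemma projective_sequence_uniform_limit_half_ball:
  fixes D :: "(real^'n) set" and \<phi> :: "nat \<Rightarrow> real^'n \<Rightarrow> real^'n"
  assumes D: "no_centered_chords_near D p"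
    and \<phi>: "\<And>j. projective_map_on (\<phi> j) D" "\<And>j. \<phi> j ` D \<subseteq> D"
    and x: "cball x R \<subseteq> D" "(\<lambda>j. \<phi> j x) \<longlonglongrightarrow> p"
  shows "uniform_limit (cball x (R/2)) \<phi> (\<lambda>_. p) sequentially"
proof (rule uniform_limitI)
  fix \<tau> :: real assume "0 < \<tau>"
  then obtain \<delta> where "0 < \<delta>" and \<delta>: "\<And>f c R. projective_map_on f (cball c R) \<Longrightarrow>
      f ` cball c R \<subseteq> D \<Longrightarrow> dist (f c) p < \<delta> \<Longrightarrow> f ` cball c (R/2) \<subseteq> ball p \<tau>"
    using projective_half_ball_image_near[OF D] by blast
  have "\<forall>\<^sub>F j in sequentially. dist (\<phi> j x) p < \<delta>"
    using tendstoD[OF x(2) \<open>0 < \<delta>\<close>] .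
  then show "\<forall>\<^sub>F j in sequentially. \<forall>y\<in>cball x (R/2). dist (\<phi> j y) p < \<tau>"
  proof eventually_elim
    case (elim j)
    have "\<phi> j ` cball x (R/2) \<subseteq> ball p \<tau>"
      using \<delta>[OF projective_map_on_subset[OF \<phi>(1) x(1)] _ elim] \<phi>(2)[of j] x(1) by blast
    then show ?case by (auto simp: dist_commute)
  qed
qed

lemma projective_sequence_tendsto_everywhere:
  fixes D :: "(real^'n) set" and \<phi> :: "nat \<Rightarrow> real^'n \<Rightarrow> real^'n"
  assumes D: "no_centered_chords_near D p" "open D" "connected D"
    and \<phi>: "\<And>j. projective_map_on (\<phi> j) D" "\<And>j. \<phi> j ` D \<subseteq> D"
    and q: "q \<in> D" "(\<lambda>j. \<phi> j q) \<longlonglongrightarrow> p"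
    and "x \<in> D"
  shows "(\<lambda>j. \<phi> j x) \<longlonglongrightarrow> p"
proof (rule connected_induction_simple[OF D(3) q(1) \<open>x \<in> D\<close>, where P = "\<lambda>x. (\<lambda>j. \<phi> j x) \<longlonglongrightarrow> p"])
  show "(\<lambda>j. \<phi> j q) \<longlonglongrightarrow> p" by (rule q(2))
  fix a assume "a \<in> D"
  then obtain R where "0 < R" and R: "cball a R \<subseteq> D"
    using D(2) open_contains_cball by blast
  have "ball a (R/8) \<subseteq> cball a R"
    using \<open>0 < R\<close> by (auto simp: subset_iff)
  then have "openin (top_of_set D) (ball a (R/8))"
    by (rule open_openin_trans[OF D(2) open_ball order_trans[OF _ R]])
  then show "\<exists>T. openin (top_of_set D) T \<and> a \<in> T \<and>
      (\<forall>y\<in>T. \<forall>z\<in>T. (\<lambda>j. \<phi> j y) \<longlonglongrightarrow> p \<longrightarrow> (\<lambda>j. \<phi> j z) \<longlonglongrightarrow> p)"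
  proof (intro exI[of _ "ball a (R/8)"] conjI ballI impI)
    show "a \<in> ball a (R/8)" using \<open>0 < R\<close> by simp
    fix y z assume y: "y \<in> ball a (R/8)" and z: "z \<in> ball a (R/8)" and "(\<lambda>j. \<phi> j y) \<longlonglongrightarrow> p"
    have "cball y (R/2) \<subseteq> cball a R"
      using y unfolding cball_subset_cball_iff by (simp add: dist_commute) linarith
    then have "uniform_limit (cball y (R/2/2)) \<phi> (\<lambda>_. p) sequentially"
      using R by (intro projective_sequence_uniform_limit_half_ball[OF D(1) \<phi>]) (auto intro: \<open>(\<lambda>j. \<phi> j y) \<longlonglongrightarrow> p\<close>)
    moreover have "z \<in> cball y (R/2/2)"
      using y z dist_triangle[of y z a] by (auto simp: dist_commute)
    ultimately have "((\<lambda>j. \<phi> j z) \<longlongrightarrow> (\<lambda>_. p) z) sequentially"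
      by (rule tendsto_uniform_limitI)
    then show "(\<lambda>j. \<phi> j z) \<longlonglongrightarrow> p" by simp
  qed
qed

lemma projective_sequence_uniform_limit_compact:
  fixes D :: "(real^'n) set" and \<phi> :: "nat \<Rightarrow> real^'n \<Rightarrow> real^'n"
  assumes D: "no_centered_chords_near D p" "open D" "connected D"
    and \<phi>: "\<And>j. projective_map_on (\<phi> j) D" "\<And>j. \<phi> j ` D \<subseteq> D"
    and q: "q \<in> D" "(\<lambda>j. \<phi> j q) \<longlonglongrightarrow> p"
    and K: "compact K" "K \<subseteq> D"
  shows "uniform_limit K \<phi> (\<lambda>_. p) sequentially"
proof -
  have "\<forall>x\<in>K. \<exists>r>0. cball x r \<subseteq> D"
    using K(2) D(2) open_contains_cball by blast
  then obtain R where R: "\<forall>x\<in>K. 0 < R x \<and> cball x (R x) \<subseteq> D"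
    using bchoice[of K "\<lambda>x r. 0 < r \<and> cball x r \<subseteq> D"] by blast
  have "K \<subseteq> (\<Union>x\<in>K. ball x (R x / 2))"
  proof
    fix x assume "x \<in> K"
    with R show "x \<in> (\<Union>x\<in>K. ball x (R x / 2))" by (intro UN_I) auto
  qed
  then obtain C where C: "C \<subseteq> K" "finite C" "K \<subseteq> (\<Union>x\<in>C. ball x (R x / 2))"
    using compactE_image[OF K(1), of K "\<lambda>x. ball x (R x / 2)"] by auto
  have "uniform_limit (\<Union>x\<in>C. cball x (R x / 2)) \<phi> (\<lambda>_. p) sequentially"
  proof (rule uniform_limit_on_UNION[OF C(2)])
    fix x assume "x \<in> C"
    with C(1) K(2) R have "cball x (R x) \<subseteq> D" "x \<in> D" by auto
    show "uniform_limit (cball x (R x / 2)) \<phi> (\<lambda>_. p) sequentially"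
      using projective_sequence_uniform_limit_half_ball[OF D(1) \<phi> \<open>cball x (R x) \<subseteq> D\<close>]
        projective_sequence_tendsto_everywhere[OF D \<phi> q \<open>x \<in> D\<close>] .
  qed
  moreover have "K \<subseteq> (\<Union>x\<in>C. cball x (R x / 2))"
    using C(3) ball_subset_cball by blast
  ultimately show ?thesis
    by (rule uniform_limit_on_subset)
qed

theorem lemma2:
  fixes D U :: "(real^'n) set" and p q :: "real^'n"
    and \<phi> :: "nat \<Rightarrow> real^'n \<Rightarrow> real^'n"
  assumes "domain D"
    and "strictly_convex_boundary_point D p"
    and "q \<in> D"
    and "\<And>j. projective_automorphism (\<phi> j) D"
    and "(\<lambda>j. \<phi> j q) \<longlonglongrightarrow> p"
    and "p \<in> interior U"
    and "convex (D \<inter> U)"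
  shows "\<forall>K. compact K \<and> K \<subseteq> D \<longrightarrow>
           (\<exists>j0. \<forall>j\<ge>j0. K \<subseteq> {x\<in>D. \<phi> j x \<in> D \<inter> U})"
proof (intro allI impI)
  fix K assume "compact K \<and> K \<subseteq> D"
  then have K: "compact K" "K \<subseteq> D" by auto
  have D: "no_centered_chords_near D p" "open D" "connected D"
    using assms(1,2) strictly_convex_boundary_point_no_centered_chords by (auto simp: domain_def)
  have \<phi>: "projective_map_on (\<phi> j) D" "\<phi> j ` D \<subseteq> D" for j
    using assms(4)[of j] by (auto simp: projective_automorphism_def bij_betw_def)
  have "uniform_limit K \<phi> (\<lambda>_. p) sequentially"
    by (rule projective_sequence_uniform_limit_compact[OF D \<phi> assms(3,5) K])
  moreover obtain r where "0 < r" and r: "ball p r \<subseteq> U"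
    using assms(6) mem_interior by blast
  ultimately obtain j0 where j0: "\<forall>j\<ge>j0. \<forall>x\<in>K. dist (\<phi> j x) p < r"
    unfolding uniform_limit_sequentially_iff by blast
  have "K \<subseteq> {x\<in>D. \<phi> j x \<in> D \<inter> U}" if "j \<ge> j0" for j
  proof
    fix x assume "x \<in> K"
    with K(2) j0 that have "x \<in> D" "\<phi> j x \<in> ball p r" by (auto simp: dist_commute)
    with \<phi>(2) r show "x \<in> {x\<in>D. \<phi> j x \<in> D \<inter> U}" by auto
  qed
  then show "\<exists>j0. \<forall>j\<ge>j0. K \<subseteq> {x\<in>D. \<phi> j x \<in> D \<inter> U}" by blast
qed

end
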